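(* Let $P\in\mathbb{C}[y]$ with $\deg P\geq 2$, $\delta\in\mathbb{C}\setminus\{0\}$, $h_1(x,y)=(y,P(y)-\delta x)$, $\theta\in(0,2\pi)\setminus\{\frac{\pi}{2},\pi,\frac{3\pi}{2}\}$, $R_\theta$ the linear map of $\mathbb{C}^2$ with matrix $\begin{pmatrix}\cos\theta&-\sin\theta\\ \sin\theta&\cos\theta\end{pmatrix}$, $h_2=R_\theta^{-1}\circ h_1\circ R_\theta$ and $G=\langle h_1,h_2\rangle$. Let $\nu=a_1\delta_{h_1}+a_2\delta_{h_2}+a_3\delta_{h_1^{-1}}+a_4\delta_{h_2^{-1}}$ with $a_i>0$ for each $i$ and $\sum_{i=1}^4a_i=1$. If $\mu$ is a $\nu$-stationary Borel probability measure on $\mathbb{C}^2$, then $\operatorname{supp}\mu$ is compact.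
   Context: A Borel probability measure $\mu$ on $\mathbb{C}^2$ is $\nu$-stationary if $\mu=\int_G g_*\mu\,d\nu(g)$, i.e. here $\mu=a_1(h_1)_*\mu+a_2(h_2)_*\mu+a_3(h_1^{-1})_*\mu+a_4(h_2^{-1})_*\mu$; equivalently $\int f\,d\mu=\int_G\int f(g\cdot x)\,d\mu(x)\,d\nu(g)$ for all compactly supported continuous $f$. *)

theory Defs
  imports "HOL-Probability.Probability" "HOL-Computational_Algebra.Polynomial"
begin

definition henon :: "complex poly \<Rightarrow> complex \<Rightarrow> complex \<times> complex \<Rightarrow> complex \<times> complex" where
  "henon P \<delta> = (\<lambda>(x, y). (y, poly P y - \<delta> * x))"

definition rot :: "real \<Rightarrow> complex \<times> complex \<Rightarrow> complex \<times> complex" where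
  "rot t = (\<lambda>(x, y). (complex_of_real (cos t) * x - complex_of_real (sin t) * y,
                       complex_of_real (sin t) * x + complex_of_real (cos t) * y))"

definition measure_support :: "'a::topological_space measure \<Rightarrow> 'a set" where
  "measure_support \<mu> = {x. \<forall>U. open U \<and> x \<in> U \<longrightarrow> emeasure \<mu> U > 0}"

end

theory Submission
  imports Defs
begin

(* Far from the origin the four maps play ping-pong: each of them increases the norm by at
   least 1 except on a thin cone of its own (around the axis y = 0 for h1, x = 0 for its
   inverse, and the rotated axes for h2 and its inverse), and these cones meet only at 0
   because the rotation angle is not a multiple of pi/2. Multiplying weights along the unique
   path from p on which the norm drops gives a function V with values in (0, 1] such that
   sum_j a_j V(g_j p) <= V p everywhere, with strict inequality far out, provided the weights
   are chosen suitably. Stationarity makes the two sides have the same integral, so mu gives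
   no mass to the complement of a ball. *)

lemma closed_measure_support: "closed (measure_support \<mu>)"
  unfolding closed_def open_subopen[of "- measure_support \<mu>"]
  by (auto simp: measure_support_def)

lemma compact_measure_support:
  fixes \<mu> :: "'a::heine_borel measure"
  assumes "emeasure \<mu> (- cball c R) = 0"
  shows "compact (measure_support \<mu>)"
proof -
  have "measure_support \<mu> \<subseteq> cball c R"
    using assms by (auto simp: measure_support_def)
  then have "bounded (measure_support \<mu>)"
    by (rule bounded_subset[OF bounded_cball])
  then show ?thesis
    using closed_measure_support by (simp add: compact_eq_bounded_closed)
qed

section \<open>Stationary measures\<close>

lemma nn_integral_stationary_distr:
  fixes g :: "'i::finite \<Rightarrow> 'a \<Rightarrow> 'a" and a :: "'i \<Rightarrow> real"
  assumes sets_\<mu>: "sets \<mu> = sets M"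
    and stationary: "\<forall>A \<in> sets M. emeasure \<mu> A = (\<Sum>j\<in>UNIV. ennreal (a j) * emeasure (distr \<mu> M (g j)) A)"
    and f: "f \<in> borel_measurable M"
  shows "(\<integral>\<^sup>+x. f x \<partial>\<mu>) = (\<Sum>j\<in>UNIV. ennreal (a j) * (\<integral>\<^sup>+x. f x \<partial>distr \<mu> M (g j)))"
  using f
proof (induction rule: borel_measurable_induct)
  case (cong u v)
  have "integral\<^sup>N N u = integral\<^sup>N N v" if "space N = space M" for N
    using cong.hyps(3) that by (intro nn_integral_cong) simp
  with cong.IH show ?case
    by (simp add: sets_eq_imp_space_eq[OF sets_\<mu>])
next
  case (set A)
  then show ?case
    using stationary sets_\<mu> by simp
next
  case (mult u c)
  then show ?case
    by (simp add: nn_integral_cmult measurable_cong_sets[OF sets_\<mu> refl] sum_distrib_left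
        mult.left_commute)
next
  case (add u v)
  then show ?case
    by (simp add: nn_integral_add measurable_cong_sets[OF sets_\<mu> refl] sum.distrib distrib_left)
next
  case (seq U)
  have U_meas: "U i \<in> borel_measurable \<mu>" for i
    using seq.hyps(1) by (simp add: measurable_cong_sets[OF sets_\<mu> refl])
  have mono: "incseq (\<lambda>i. ennreal (a j) * integral\<^sup>N (distr \<mu> M (g j)) (U i))" for j
    using incseq_nn_integral[OF seq.hyps(3)] by (auto simp: incseq_def intro: mult_left_mono)
  have "(\<integral>\<^sup>+x. (SUP i. U i) x \<partial>\<mu>) = (SUP i. integral\<^sup>N \<mu> (U i))"
    unfolding SUP_apply by (rule nn_integral_monotone_convergence_SUP[OF seq.hyps(3) U_meas])
  also have "\<dots> = (SUP i. \<Sum>j\<in>UNIV. ennreal (a j) * integral\<^sup>N (distr \<mu> M (g j)) (U i))"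
    using seq.IH by simp
  also have "\<dots> = (\<Sum>j\<in>UNIV. ennreal (a j) * (SUP i. integral\<^sup>N (distr \<mu> M (g j)) (U i)))"
    using mono by (simp add: ennreal_SUP_sum SUP_mult_left_ennreal)
  also have "\<dots> = (\<Sum>j\<in>UNIV. ennreal (a j) * (\<integral>\<^sup>+x. (SUP i. U i) x \<partial>distr \<mu> M (g j)))"
    unfolding SUP_apply
    by (subst nn_integral_monotone_convergence_SUP[OF seq.hyps(3)]) (simp_all add: seq.hyps(1))
  finally show ?case .
qed

lemma nn_integral_stationary_average:
  fixes g :: "'i::finite \<Rightarrow> 'a \<Rightarrow> 'a" and a :: "'i \<Rightarrow> real" and V :: "'a \<Rightarrow> real"
  assumes sets_\<mu>: "sets \<mu> = sets M"
    and g_meas: "\<And>j. g j \<in> M \<rightarrow>\<^sub>M M" and a_nonneg: "\<And>j. 0 \<le> a j"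
    and stationary: "\<forall>A \<in> sets M. emeasure \<mu> A = (\<Sum>j\<in>UNIV. ennreal (a j) * emeasure (distr \<mu> M (g j)) A)"
    and V_meas: "V \<in> borel_measurable M" and V_nonneg: "\<And>x. 0 \<le> V x"
  shows "(\<integral>\<^sup>+x. V x \<partial>\<mu>) = (\<integral>\<^sup>+x. (\<Sum>j\<in>UNIV. a j * V (g j x)) \<partial>\<mu>)"
proof -
  have "(\<integral>\<^sup>+x. V x \<partial>\<mu>) = (\<Sum>j\<in>UNIV. ennreal (a j) * (\<integral>\<^sup>+x. V x \<partial>distr \<mu> M (g j)))"
    using V_meas by (intro nn_integral_stationary_distr[OF sets_\<mu> stationary]) simp
  also have "\<dots> = (\<Sum>j\<in>UNIV. ennreal (a j) * (\<integral>\<^sup>+x. V (g j x) \<partial>\<mu>))"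
    using V_meas g_meas by (simp add: nn_integral_distr measurable_cong_sets[OF sets_\<mu> refl])
  also have "\<dots> = (\<Sum>j\<in>UNIV. \<integral>\<^sup>+x. a j * V (g j x) \<partial>\<mu>)"
    using g_meas V_meas a_nonneg V_nonneg
    by (intro sum.cong refl, subst nn_integral_cmult[symmetric])
       (simp_all add: measurable_cong_sets[OF sets_\<mu> refl] ennreal_mult)
  also have "\<dots> = (\<integral>\<^sup>+x. (\<Sum>j\<in>UNIV. a j * V (g j x)) \<partial>\<mu>)"
    using g_meas V_meas a_nonneg V_nonneg
    by (subst nn_integral_sum[symmetric])
       (simp_all add: measurable_cong_sets[OF sets_\<mu> refl] sum_nonneg)
  finally show ?thesis .
qed

lemma nn_integral_superharmonic_defect_eq_0:
  fixes g :: "'i::finite \<Rightarrow> 'a \<Rightarrow> 'a" and a :: "'i \<Rightarrow> real" and V :: "'a \<Rightarrow> real"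
  assumes "finite_measure \<mu>" and sets_\<mu>: "sets \<mu> = sets M"
    and g_meas: "\<And>j. g j \<in> M \<rightarrow>\<^sub>M M" and a_nonneg: "\<And>j. 0 \<le> a j"
    and stationary: "\<forall>A \<in> sets M. emeasure \<mu> A = (\<Sum>j\<in>UNIV. ennreal (a j) * emeasure (distr \<mu> M (g j)) A)"
    and V_meas: "V \<in> borel_measurable M" and V_nonneg: "\<And>x. 0 \<le> V x" and V_bounded: "\<And>x. V x \<le> c"
    and superharmonic: "\<And>x. (\<Sum>j\<in>UNIV. a j * V (g j x)) \<le> V x"
  shows "(\<integral>\<^sup>+x. V x - (\<Sum>j\<in>UNIV. a j * V (g j x)) \<partial>\<mu>) = 0"
proof -
  define PV where "PV x = (\<Sum>j\<in>UNIV. a j * V (g j x))" for x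
  have [measurable]: "g j \<in> \<mu> \<rightarrow>\<^sub>M M" "V \<in> borel_measurable \<mu>" for j
    using V_meas g_meas by (simp_all add: measurable_cong_sets[OF sets_\<mu> refl])
  note [measurable] = V_meas
  have [measurable]: "PV \<in> borel_measurable \<mu>"
    unfolding PV_def[abs_def] by measurable
  have "(\<integral>\<^sup>+x. PV x \<partial>\<mu>) + 0 = (\<integral>\<^sup>+x. V x \<partial>\<mu>)"
    unfolding PV_def
    by (simp add: nn_integral_stationary_average[OF sets_\<mu> g_meas a_nonneg stationary V_meas V_nonneg])
  also have "\<dots> = (\<integral>\<^sup>+x. ennreal (PV x) + ennreal (V x - PV x) \<partial>\<mu>)"
    using superharmonic a_nonneg V_nonneg
    by (intro nn_integral_cong) (simp add: PV_def sum_nonneg ennreal_plus[symmetric] del: ennreal_plus)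
  also have "\<dots> = (\<integral>\<^sup>+x. PV x \<partial>\<mu>) + (\<integral>\<^sup>+x. V x - PV x \<partial>\<mu>)"
    by (rule nn_integral_add) simp_all
  moreover have "(\<integral>\<^sup>+x. PV x \<partial>\<mu>) \<noteq> \<infinity>"
  proof -
    have "(\<integral>\<^sup>+x. PV x \<partial>\<mu>) \<le> (\<integral>\<^sup>+x. c \<partial>\<mu>)"
      using superharmonic V_bounded unfolding PV_def
      by (intro nn_integral_mono ennreal_leI) (meson order.trans)
    also have "\<dots> < \<infinity>"
      using finite_measure.emeasure_finite[OF \<open>finite_measure \<mu>\<close>]
      by (simp add: ennreal_mult_less_top less_top)
    finally show ?thesis
      by simp
  qed
  ultimately have "(\<integral>\<^sup>+x. V x - PV x \<partial>\<mu>) = 0"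
    by (metis ennreal_add_left_cancel)
  then show ?thesis
    by (simp add: PV_def)
qed

lemma stationary_strictly_superharmonic_null:
  fixes g :: "'i::finite \<Rightarrow> 'a \<Rightarrow> 'a" and a :: "'i \<Rightarrow> real" and V :: "'a \<Rightarrow> real"
  assumes "finite_measure \<mu>" and sets_\<mu>: "sets \<mu> = sets M"
    and g_meas: "\<And>j. g j \<in> M \<rightarrow>\<^sub>M M" and a_nonneg: "\<And>j. 0 \<le> a j"
    and stationary: "\<forall>A \<in> sets M. emeasure \<mu> A = (\<Sum>j\<in>UNIV. ennreal (a j) * emeasure (distr \<mu> M (g j)) A)"
    and V_meas: "V \<in> borel_measurable M" and V_nonneg: "\<And>x. 0 \<le> V x" and V_bounded: "\<And>x. V x \<le> c"
    and superharmonic: "\<And>x. (\<Sum>j\<in>UNIV. a j * V (g j x)) \<le> V x"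
    and U: "U \<in> sets M" and strict: "\<And>x. x \<in> U \<Longrightarrow> (\<Sum>j\<in>UNIV. a j * V (g j x)) < V x"
  shows "emeasure \<mu> U = 0"
proof -
  define D where "D x = ennreal (V x - (\<Sum>j\<in>UNIV. a j * V (g j x)))" for x
  have [measurable]: "g j \<in> \<mu> \<rightarrow>\<^sub>M M" "V \<in> borel_measurable \<mu>" for j
    using V_meas g_meas by (simp_all add: measurable_cong_sets[OF sets_\<mu> refl])
  note [measurable] = V_meas
  have [measurable]: "D \<in> borel_measurable \<mu>"
    unfolding D_def[abs_def] by measurable
  have "integral\<^sup>N \<mu> D = 0"
    unfolding D_def by (rule nn_integral_superharmonic_defect_eq_0[OF assms(1-9)])
  then have "emeasure \<mu> {x \<in> space \<mu>. D x \<noteq> 0} = 0"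
    by (subst (asm) nn_integral_0_iff) simp_all
  moreover have "{x \<in> space \<mu>. D x \<noteq> 0} \<in> sets \<mu>"
    by measurable
  moreover have "U \<subseteq> {x \<in> space \<mu>. D x \<noteq> 0}"
    using strict sets.sets_into_space[OF U] sets_eq_imp_space_eq[OF sets_\<mu>]
    by (force simp: D_def ennreal_eq_0_iff)
  ultimately show ?thesis
    by (meson emeasure_eq_0)
qed

section \<open>A ping-pong Lyapunov function\<close>

lemma one_le_cross_ratio_sum:
  fixes u v e :: real
  assumes "0 < u" and "0 < v" and "0 \<le> e" and "e \<le> u" and "e \<le> v"
  shows "1 \<le> u / (v + e) + v / (u + e)"
proof -
  have "1 = u / (u + v) + v / (u + v)"
    using assms(1,2) by (simp add: add_divide_distrib[symmetric])
  also have "\<dots> \<le> u / (v + e) + v / (u + e)"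
  proof (rule add_mono)
    show "u / (u + v) \<le> u / (v + e)"
      using assms by (intro divide_left_mono) simp_all
    show "v / (u + v) \<le> v / (u + e)"
      using assms by (intro divide_left_mono) simp_all
  qed
  finally show ?thesis .
qed

lemma contracting_weights:
  fixes a :: "'i::finite \<Rightarrow> real" and rev :: "'i \<Rightarrow> 'i"
  assumes a_pos: "\<And>j. 0 < a j" and a_sum: "(\<Sum>j\<in>UNIV. a j) = 1"
    and rev_rev: "\<And>j. rev (rev j) = j" and rev_neq: "\<And>j. rev j \<noteq> j"
    and i: "i \<noteq> k" "i \<noteq> rev k" and e_pos: "0 < e" and e_le: "\<And>j. e \<le> a j"
  defines "x \<equiv> \<lambda>j. a j / (a j + e)"
  shows "(\<Sum>j\<in>-{k}. a j * x (rev j)) + a k / x k < 1"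
proof -
  (* a k / x k exceeds a k by exactly e, while a j * x (rev j) falls short of a j by
     e * a j / (a (rev j) + e); the pair {i, rev i} alone makes up a shortfall of at least e. *)
  define S where "S = (\<Sum>j\<in>-{k}. a j / (a (rev j) + e))"
  have weight_rev: "a j * x (rev j) = a j - e * (a j / (a (rev j) + e))" for j
  proof -
    have "0 < a (rev j) + e"
      using a_pos e_pos by (simp add: add_pos_pos)
    then show ?thesis
      unfolding x_def by (simp add: field_simps)
  qed
  have distinct: "rev i \<noteq> i" "rev i \<noteq> rev k" "rev i \<noteq> k" "rev k \<noteq> k"
    using i rev_neq rev_rev by metis+
  have "1 + a (rev k) / (a k + e) \<le> (\<Sum>j\<in>{i, rev i, rev k}. a j / (a (rev j) + e))"
    using one_le_cross_ratio_sum[OF a_pos[of i] a_pos[of "rev i"] less_imp_le[OF e_pos] e_le e_le]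
      distinct i by (simp add: rev_rev add.assoc)
  also have "\<dots> \<le> S"
    unfolding S_def using distinct i a_pos e_pos
    by (intro sum_mono2) (auto intro: divide_nonneg_pos less_imp_le add_pos_pos)
  finally have "1 + a (rev k) / (a k + e) \<le> S" .
  moreover have "0 < a (rev k) / (a k + e)"
    using a_pos e_pos by (simp add: add_pos_pos)
  ultimately have "e < e * S"
    using e_pos by simp
  have "(\<Sum>j\<in>-{k}. a j) = 1 - a k"
    using a_sum by (simp add: sum.remove[of UNIV k] Compl_eq_Diff_UNIV)
  then have "(\<Sum>j\<in>-{k}. a j * x (rev j)) = 1 - a k - e * S"
    by (simp add: weight_rev sum_subtractf S_def sum_distrib_left)
  moreover have "a k / x k = a k + e"
    unfolding x_def using a_pos[of k] e_pos by simp
  ultimately show ?thesis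
    using \<open>e < e * S\<close> by simp
qed

lemma contracting_weights_exist:
  fixes a :: "'i::finite \<Rightarrow> real" and rev :: "'i \<Rightarrow> 'i"
  assumes a_pos: "\<And>j. 0 < a j" and a_sum: "(\<Sum>j\<in>UNIV. a j) = 1"
    and rev_rev: "\<And>j. rev (rev j) = j" and rev_neq: "\<And>j. rev j \<noteq> j"
    and other_pair: "\<And>k. \<exists>i. i \<noteq> k \<and> i \<noteq> rev k"
  obtains x where "\<And>j. 0 < x j" and "\<And>j. x j < 1"
    and "\<And>k. (\<Sum>j\<in>-{k}. a j * x (rev j)) + a k / x k < 1"
proof -
  define e where "e = Min (range a)"
  have e_pos: "0 < e"
    unfolding e_def using a_pos by (simp add: Min_gr_iff)
  have e_le: "e \<le> a j" for j
    unfolding e_def by simp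
  show ?thesis
  proof (rule that)
    show "0 < a j / (a j + e)" "a j / (a j + e) < 1" for j
      using a_pos[of j] e_pos by simp_all
    show "(\<Sum>j\<in>-{k}. a j * (a (rev j) / (a (rev j) + e))) + a k / (a k / (a k + e)) < 1" for k
      using other_pair[of k] contracting_weights[OF a_pos a_sum rev_rev rev_neq _ _ e_pos e_le]
      by blast
  qed
qed

locale ping_pong =
  fixes g :: "'i::finite \<Rightarrow> 'a \<Rightarrow> 'a" and rev :: "'i \<Rightarrow> 'i"
    and l :: "'a \<Rightarrow> real" and C :: "'i \<Rightarrow> 'a set"
  assumes l_nonneg: "0 \<le> l p"
    and g_rev: "g (rev j) (g j p) = p"
    and rev_neq: "rev j \<noteq> j"
    and expanding: "0 < l p \<Longrightarrow> p \<notin> C j \<Longrightarrow> l p + 1 \<le> l (g j p)"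
    and cones_disjoint: "0 < l p \<Longrightarrow> p \<in> C i \<Longrightarrow> p \<in> C j \<Longrightarrow> i = j"
begin

definition descends :: "'a \<Rightarrow> 'i \<Rightarrow> bool" where
  "descends p j \<longleftrightarrow> l (g j p) \<le> l p - 1"

lemma descendsD:
  assumes "descends p j"
  shows "1 \<le> l p" and "p \<in> C j"
proof -
  show "1 \<le> l p"
    using assms l_nonneg[of "g j p"] by (simp add: descends_def)
  then show "p \<in> C j"
    using assms expanding[of p j] by (auto simp: descends_def)
qed

lemma descends_unique: "descends p i \<Longrightarrow> descends p j \<Longrightarrow> i = j"
  using cones_disjoint descendsD by (metis less_le_trans zero_less_one)

lemma descends_rev: "0 < l p \<Longrightarrow> p \<notin> C j \<Longrightarrow> descends (g j p) (rev j)"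
  using expanding[of p j] by (simp add: descends_def g_rev)

text \<open>The Lyapunov function multiplies the weights \<open>x j\<close> along the path from \<open>p\<close> on which
  every step lowers \<open>l\<close> by at least one. At most one map descends from a given point, so the
  product over \<open>j\<close> selects that step (or is 1 if there is none); the path has at most \<open>l p\<close>
  steps, which bounds the recursion depth.\<close>

fun lyapunov_iter :: "('i \<Rightarrow> real) \<Rightarrow> nat \<Rightarrow> 'a \<Rightarrow> real" where
  "lyapunov_iter x 0 p = 1"
| "lyapunov_iter x (Suc n) p =
     (\<Prod>j\<in>UNIV. if descends p j then x j * lyapunov_iter x n (g j p) else 1)"

lemma lyapunov_iter_Suc_descends:
  assumes "descends p j"
  shows "lyapunov_iter x (Suc n) p = x j * lyapunov_iter x n (g j p)"
proof -
  have "descends p i \<longleftrightarrow> i = j" for i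
    using assms descends_unique by blast
  then show ?thesis by simp
qed

lemma lyapunov_iter_stable: "l p \<le> n \<Longrightarrow> l p \<le> m \<Longrightarrow> lyapunov_iter x n p = lyapunov_iter x m p"
proof (induction n arbitrary: m p)
  case 0
  then have "\<forall>j. \<not> descends p j"
    using descendsD(1) by fastforce
  then show ?case by (cases m) simp_all
next
  case (Suc n)
  show ?case
  proof (cases "\<exists>j. descends p j")
    case True
    then obtain j where j: "descends p j" ..
    then obtain m' where m: "m = Suc m'"
      using descendsD(1)[OF j] Suc.prems(2) by (cases m) auto
    have "l (g j p) \<le> n" "l (g j p) \<le> m'"
      using j Suc.prems m by (auto simp: descends_def)
    then have "lyapunov_iter x n (g j p) = lyapunov_iter x m' (g j p)"
      by (rule Suc.IH)
    then show ?thesis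
      unfolding m lyapunov_iter_Suc_descends[OF j] by simp
  next
    case False
    then show ?thesis by (cases m) simp_all
  qed
qed

definition lyapunov :: "('i \<Rightarrow> real) \<Rightarrow> 'a \<Rightarrow> real" where
  "lyapunov x p = lyapunov_iter x (nat \<lceil>l p\<rceil>) p"

lemma lyapunov_eq_iter: "l p \<le> n \<Longrightarrow> lyapunov x p = lyapunov_iter x n p"
  unfolding lyapunov_def by (rule lyapunov_iter_stable) linarith+

lemma lyapunov_descends: "descends p j \<Longrightarrow> lyapunov x p = x j * lyapunov x (g j p)"
proof -
  assume j: "descends p j"
  have "lyapunov x p = lyapunov_iter x (Suc (nat \<lceil>l p\<rceil>)) p"
    by (rule lyapunov_eq_iter) linarith
  also have "\<dots> = x j * lyapunov_iter x (nat \<lceil>l p\<rceil>) (g j p)"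
    using j by (rule lyapunov_iter_Suc_descends)
  also have "lyapunov_iter x (nat \<lceil>l p\<rceil>) (g j p) = lyapunov x (g j p)"
    using j by (intro lyapunov_eq_iter[symmetric]) (simp add: descends_def, linarith)
  finally show ?thesis .
qed

lemma lyapunov_no_descent:
  assumes "\<forall>j. \<not> descends p j"
  shows "lyapunov x p = 1"
proof -
  have "l p \<le> Suc (nat \<lceil>l p\<rceil>)"
    by linarith
  from lyapunov_eq_iter[OF this] show ?thesis
    using assms by simp
qed

lemma lyapunov_expanding: "0 < l p \<Longrightarrow> p \<notin> C j \<Longrightarrow> lyapunov x (g j p) = x (rev j) * lyapunov x p"
  using lyapunov_descends[OF descends_rev] by (simp add: g_rev)

lemma lyapunov_measurable:
  assumes [measurable]: "l \<in> borel_measurable M" "\<And>j. g j \<in> M \<rightarrow>\<^sub>M M"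
  shows "lyapunov x \<in> borel_measurable M"
proof -
  have [measurable]: "Measurable.pred M (\<lambda>p. descends p j)" for j
    unfolding descends_def by measurable
  have [measurable]: "lyapunov_iter x n \<in> borel_measurable M" for n
  proof (induction n)
    case (Suc n)
    note [measurable] = Suc.IH
    have "lyapunov_iter x (Suc n) =
      (\<lambda>p. \<Prod>j\<in>UNIV. if descends p j then x j * lyapunov_iter x n (g j p) else 1)"
      by (rule ext) simp
    also have "\<dots> \<in> borel_measurable M"
      by measurable
    finally show ?case .
  qed simp
  have depth: "(\<lambda>p. nat \<lceil>l p\<rceil>) \<in> M \<rightarrow>\<^sub>M count_space UNIV"
    by measurable
  show ?thesis
    unfolding lyapunov_def[abs_def]
    by (rule measurable_compose_countable[where f = "lyapunov_iter x", OF _ depth]) simp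
qed

context
  fixes x :: "'i \<Rightarrow> real"
  assumes x_pos: "\<And>j. 0 < x j" and x_less_1: "\<And>j. x j < 1"
begin

lemma lyapunov_iter_bounds: "0 < lyapunov_iter x n p \<and> lyapunov_iter x n p \<le> 1"
proof (induction n arbitrary: p)
  case (Suc n)
  have "0 < x j * lyapunov_iter x n q" "x j * lyapunov_iter x n q \<le> 1" for j q
    using Suc.IH[of q] x_pos[of j] x_less_1[of j] by (simp_all add: mult_le_one)
  then show ?case
    by (auto intro!: prod_pos prod_le_1 simp: less_imp_le)
qed simp

lemma lyapunov_pos: "0 < lyapunov x p" and lyapunov_le_1: "lyapunov x p \<le> 1"
  using lyapunov_iter_bounds by (simp_all add: lyapunov_def)

lemma lyapunov_drift_descends:
  assumes "descends p k"
  shows "(\<Sum>j\<in>UNIV. a j * lyapunov x (g j p)) =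
           lyapunov x p * ((\<Sum>j\<in>-{k}. a j * x (rev j)) + a k / x k)"
proof -
  have "0 < l p" "p \<in> C k"
    using descendsD[OF assms] by simp_all
  then have "lyapunov x (g j p) = x (rev j) * lyapunov x p" if "j \<in> -{k}" for j
    using that cones_disjoint lyapunov_expanding by blast
  moreover have "lyapunov x (g k p) = lyapunov x p / x k"
    using lyapunov_descends[OF assms] x_pos[of k] by simp
  ultimately show ?thesis
    by (simp add: sum.remove[of UNIV k] Compl_eq_Diff_UNIV sum_distrib_left distrib_left
        algebra_simps)
qed

context
  fixes a :: "'i \<Rightarrow> real"
  assumes a_pos: "\<And>j. 0 < a j" and a_sum: "(\<Sum>j\<in>UNIV. a j) = 1"
begin

lemma lyapunov_drift_no_descent:
  assumes no_descent: "\<forall>j. \<not> descends p j"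
  shows "(\<Sum>j\<in>UNIV. a j * lyapunov x (g j p)) \<le> lyapunov x p"
    and "0 < l p \<Longrightarrow> (\<Sum>j\<in>UNIV. a j * lyapunov x (g j p)) < lyapunov x p"
proof -
  have V_p: "lyapunov x p = 1"
    using no_descent by (rule lyapunov_no_descent)
  have le: "a j * lyapunov x (g j p) \<le> a j" for j
    using a_pos[of j] lyapunov_le_1 by (simp add: mult_left_le)
  then show "(\<Sum>j\<in>UNIV. a j * lyapunov x (g j p)) \<le> lyapunov x p"
    using V_p a_sum sum_mono[of UNIV "\<lambda>j. a j * lyapunov x (g j p)" a] by simp
  assume "0 < l p"
  obtain j0 where "p \<notin> C j0"
    using cones_disjoint[OF \<open>0 < l p\<close>] rev_neq by metis
  then have "a j0 * lyapunov x (g j0 p) < a j0"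
    using \<open>0 < l p\<close> V_p a_pos x_less_1 by (simp add: lyapunov_expanding)
  then have "(\<Sum>j\<in>UNIV. a j * lyapunov x (g j p)) < (\<Sum>j\<in>UNIV. a j)"
    using le by (intro sum_strict_mono_ex1) auto
  then show "(\<Sum>j\<in>UNIV. a j * lyapunov x (g j p)) < lyapunov x p"
    using V_p a_sum by simp
qed

lemma lyapunov_drift:
  assumes x_contracting: "\<And>k. (\<Sum>j\<in>-{k}. a j * x (rev j)) + a k / x k < 1"
  shows lyapunov_drift_le: "(\<Sum>j\<in>UNIV. a j * lyapunov x (g j p)) \<le> lyapunov x p"
    and lyapunov_drift_less: "0 < l p \<Longrightarrow> (\<Sum>j\<in>UNIV. a j * lyapunov x (g j p)) < lyapunov x p"
proof -
  have descent: "(\<Sum>j\<in>UNIV. a j * lyapunov x (g j p)) < lyapunov x p" if "descends p k" for k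
    using lyapunov_drift_descends[OF that] x_contracting[of k] lyapunov_pos[of p]
    by (simp add: mult_less_cancel_left1)
  show "(\<Sum>j\<in>UNIV. a j * lyapunov x (g j p)) \<le> lyapunov x p"
    using lyapunov_drift_no_descent(1) descent by (meson less_imp_le)
  show "0 < l p \<Longrightarrow> (\<Sum>j\<in>UNIV. a j * lyapunov x (g j p)) < lyapunov x p"
    using lyapunov_drift_no_descent(2) descent by meson
qed

end

end

lemma stationary_measure_null_far:
  fixes \<mu> :: "'a measure" and a :: "'i \<Rightarrow> real"
  assumes "finite_measure \<mu>" and "sets \<mu> = sets M"
    and g_meas: "\<And>j. g j \<in> M \<rightarrow>\<^sub>M M" and l_meas: "l \<in> borel_measurable M"
    and a_pos: "\<And>j. 0 < a j" and a_sum: "(\<Sum>j\<in>UNIV. a j) = 1"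
    and stationary: "\<forall>A \<in> sets M. emeasure \<mu> A = (\<Sum>j\<in>UNIV. ennreal (a j) * emeasure (distr \<mu> M (g j)) A)"
    and rev_rev: "\<And>j. rev (rev j) = j" and other_pair: "\<And>k. \<exists>i. i \<noteq> k \<and> i \<noteq> rev k"
  shows "emeasure \<mu> {p \<in> space M. 0 < l p} = 0"
proof -
  obtain x where x: "\<And>j. 0 < x j" "\<And>j. x j < 1"
    "\<And>k. (\<Sum>j\<in>-{k}. a j * x (rev j)) + a k / x k < 1"
    by (rule contracting_weights_exist[OF a_pos a_sum rev_rev rev_neq other_pair]) (rule that)
  show ?thesis
  proof (rule stationary_strictly_superharmonic_null[OF assms(1,2) g_meas _ stationary])
    show "lyapunov x \<in> borel_measurable M"
      by (rule lyapunov_measurable[OF l_meas g_meas])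
    show "0 \<le> lyapunov x p" "lyapunov x p \<le> 1" for p
      by (simp_all add: less_imp_le lyapunov_pos[OF x(1,2)] lyapunov_le_1[OF x(1,2)])
    show "(\<Sum>j\<in>UNIV. a j * lyapunov x (g j p)) \<le> lyapunov x p" for p
      by (rule lyapunov_drift_le[OF x(1,2) a_pos a_sum x(3)])
    show "(\<Sum>j\<in>UNIV. a j * lyapunov x (g j p)) < lyapunov x p" if "p \<in> {p \<in> space M. 0 < l p}" for p
      using that by (intro lyapunov_drift_less[OF x(1,2) a_pos a_sum x(3)]) simp
    show "{p \<in> space M. 0 < l p} \<in> sets M"
      using l_meas by simp
  qed (simp add: a_pos less_imp_le)
qed

end

definition expands_outside :: "'a::real_normed_vector set \<Rightarrow> ('a \<Rightarrow> 'a) \<Rightarrow> bool" where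
  "expands_outside C f \<longleftrightarrow> (\<forall>M. \<forall>\<^sub>F p in at_infinity. p \<notin> C \<longrightarrow> M * norm p \<le> norm (f p))"

lemma expands_outside_conj_isometry:
  assumes "expands_outside C f" and "\<And>p. norm (L p) = norm p" and "\<And>q. norm (L' q) = norm q"
  shows "expands_outside (L -` C) (L' \<circ> f \<circ> L)"
  unfolding expands_outside_def
proof
  fix M
  obtain b where "\<And>q. b \<le> norm q \<Longrightarrow> q \<notin> C \<longrightarrow> M * norm q \<le> norm (f q)"
    using assms(1) unfolding expands_outside_def eventually_at_infinity by blast
  then show "\<forall>\<^sub>F p in at_infinity. p \<notin> L -` C \<longrightarrow> M * norm p \<le> norm ((L' \<circ> f \<circ> L) p)"
    unfolding eventually_at_infinity using assms(2,3) by (metis comp_apply vimageI)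
qed

lemma poly_dominates_linear:
  fixes P :: "'a::real_normed_field poly"
  assumes "degree P \<ge> 2"
  shows "\<forall>\<^sub>F z in at_infinity. c * norm z \<le> norm (poly P z)"
proof -
  have "((\<lambda>z. poly [:0, 1:] z / poly P z) \<longlongrightarrow> 0) at_infinity"
    using assms by (intro poly_divide_tendsto_0_at_infinity) simp
  then have "\<forall>\<^sub>F z in at_infinity. norm (z / poly P z) < 1 / (\<bar>c\<bar> + 1)"
    by (auto simp: tendsto_iff dist_norm intro: divide_pos_pos)
  moreover have "\<forall>\<^sub>F z in at_infinity. poly P z \<noteq> 0"
    using assms by (intro filterlim_at_infinity_imp_eventually_ne filterlim_poly_at_infinity) simp
  ultimately show ?thesis
  proof eventually_elim
    case (elim z)
    then have "(\<bar>c\<bar> + 1) * norm z < norm (poly P z)"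
      by (simp add: norm_divide field_simps)
    moreover have "c * norm z \<le> (\<bar>c\<bar> + 1) * norm z"
      by (intro mult_right_mono) simp_all
    ultimately show "c * norm z \<le> norm (poly P z)"
      by linarith
  qed
qed

section \<open>Rotations and Henon maps\<close>

lemma rot_add: "rot s (rot t p) = rot (s + t) p"
  by (cases p) (simp add: rot_def cos_add sin_add algebra_simps)

lemma rot_0 [simp]: "rot 0 = id"
  by (auto simp: fun_eq_iff rot_def)

lemma rot_neg_rot [simp]: "rot (- t) (rot t p) = p" and rot_rot_neg [simp]: "rot t (rot (- t) p) = p"
  by (simp_all add: rot_add)

lemma bij_rot: "bij (rot t)"
  by (rule bij_betwI[of _ _ _ "rot (- t)"]) auto

lemma inv_rot: "inv (rot t) = rot (- t)"
  by (rule inv_equality) simp_all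

lemma norm_rot [simp]: "norm (rot t p) = norm p"
proof -
  have rotation: "(cos t * u - sin t * v)\<^sup>2 + (sin t * u + cos t * v)\<^sup>2 = u\<^sup>2 + v\<^sup>2" for u v
  proof -
    have "(cos t * u - sin t * v)\<^sup>2 + (sin t * u + cos t * v)\<^sup>2
        = ((sin t)\<^sup>2 + (cos t)\<^sup>2) * (u\<^sup>2 + v\<^sup>2)"
      by algebra
    also have "\<dots> = u\<^sup>2 + v\<^sup>2"
      by (simp only: sin_cos_squared_add mult_1_left)
    finally show ?thesis .
  qed
  obtain x y where p: "p = (x, y)"
    by (cases p)
  show ?thesis
    using rotation[of "Re x" "Re y"] rotation[of "Im x" "Im y"]
    by (simp add: p rot_def norm_Pair cmod_power2)
qed

lemma continuous_on_rot: "continuous_on UNIV (rot t)"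
  unfolding rot_def case_prod_beta' by (intro continuous_intros)

definition henon_inv :: "complex poly \<Rightarrow> complex \<Rightarrow> complex \<times> complex \<Rightarrow> complex \<times> complex" where
  "henon_inv P \<delta> = (\<lambda>(x, y). ((poly P x - y) / \<delta>, x))"

lemma henon_inv_henon [simp]: "\<delta> \<noteq> 0 \<Longrightarrow> henon_inv P \<delta> (henon P \<delta> p) = p"
  and henon_henon_inv [simp]: "\<delta> \<noteq> 0 \<Longrightarrow> henon P \<delta> (henon_inv P \<delta> p) = p"
  by (cases p, simp add: henon_def henon_inv_def)+

lemma bij_henon:
  assumes "\<delta> \<noteq> 0"
  shows "bij (henon P \<delta>)"
  using assms by (intro bij_betwI[of _ _ _ "henon_inv P \<delta>"]) auto

lemma inv_henon: "\<delta> \<noteq> 0 \<Longrightarrow> inv (henon P \<delta>) = henon_inv P \<delta>"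
  by (rule inv_equality) simp_all

lemma henon_inv_eq_swap_henon_swap:
  "henon_inv P \<delta> = prod.swap \<circ> henon (smult (inverse \<delta>) P) (inverse \<delta>) \<circ> prod.swap"
  by (auto simp: fun_eq_iff henon_def henon_inv_def divide_inverse algebra_simps)

lemma continuous_on_henon: "continuous_on UNIV (henon P \<delta>)"
  and continuous_on_henon_inv: "continuous_on UNIV (henon_inv P \<delta>)"
  unfolding henon_def henon_inv_def case_prod_beta' divide_inverse by (intro continuous_intros)+

definition horizontal_cone :: "real \<Rightarrow> (complex \<times> complex) set" where
  "horizontal_cone k = {p. norm (snd p) \<le> k * norm (fst p)}"

lemma swap_vimage_horizontal_cone: "prod.swap -` horizontal_cone k = rot (pi / 2) -` horizontal_cone k"
  by (auto simp: horizontal_cone_def rot_def)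

lemma horizontal_cone_rot_disjoint:
  assumes k: "0 < k" "4 * k \<le> \<bar>sin t\<bar>"
    and p: "p \<in> horizontal_cone k" "rot t p \<in> horizontal_cone k"
  shows "p = 0"
proof -
  obtain x y where xy: "p = (x, y)"
    by (cases p)
  define c s where "c = complex_of_real (cos t)" and "s = complex_of_real (sin t)"
  have y: "norm y \<le> k * norm x"
    using p(1) by (simp add: horizontal_cone_def xy)
  have rot_p: "norm (s * x + c * y) \<le> k * norm (c * x - s * y)"
    using p(2) by (simp add: horizontal_cone_def xy rot_def c_def s_def)
  have "norm (c * y) \<le> norm y" "norm (s * y) \<le> norm y"
    by (simp_all add: c_def s_def norm_mult mult_left_le_one_le abs_cos_le_one abs_sin_le_one)
  then have norm_cy: "norm (c * y) \<le> k * norm x" and norm_sy: "norm (s * y) \<le> k * norm x"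
    using y by linarith+
  have "\<bar>sin t\<bar> * norm x - k * norm x \<le> norm (s * x + c * y)"
    using norm_triangle_ineq2[of "s * x" "- (c * y)"] norm_cy by (simp add: s_def norm_mult)
  also have "\<dots> \<le> k * (norm x + k * norm x)"
  proof -
    have "norm (c * x) \<le> norm x"
      by (simp add: c_def norm_mult mult_left_le_one_le abs_cos_le_one)
    then have "norm (c * x - s * y) \<le> norm x + k * norm x"
      using norm_triangle_ineq4[of "c * x" "s * y"] norm_sy by linarith
    then have "k * norm (c * x - s * y) \<le> k * (norm x + k * norm x)"
      using k(1) by (intro mult_left_mono) simp_all
    then show ?thesis
      using rot_p by linarith
  qed
  finally have "(\<bar>sin t\<bar> - 2 * k - k * k) * norm x \<le> 0"
    by (simp add: algebra_simps)
  moreover have "k \<le> 1 / 4"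
    using k(2) abs_sin_le_one[of t] by linarith
  then have "k * k \<le> k * (1 / 4)"
    using k(1) by (intro mult_left_mono) simp_all
  then have "0 < \<bar>sin t\<bar> - 2 * k - k * k"
    using k by linarith
  ultimately have "norm x \<le> 0"
    by (simp add: mult_le_0_iff)
  then show "p = 0"
    using y by (simp add: xy zero_prod_def)
qed

lemma outside_horizontal_cone:
  assumes "0 < k" and "p \<notin> horizontal_cone k"
  shows "norm (fst p) \<le> norm (snd p) / k" and "norm p \<le> (1 + 1 / k) * norm (snd p)"
proof -
  have "k * norm (fst p) \<le> norm (snd p)"
    using assms(2) by (simp add: horizontal_cone_def)
  then show fst_le: "norm (fst p) \<le> norm (snd p) / k"
    using assms(1) by (simp add: pos_le_divide_eq mult.commute)
  have "norm p \<le> norm (fst p) + norm (snd p)"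
    using norm_Pair_le[of "fst p" "snd p"] by simp
  also have "\<dots> \<le> (1 + 1 / k) * norm (snd p)"
    using fst_le by (simp add: algebra_simps)
  finally show "norm p \<le> (1 + 1 / k) * norm (snd p)" .
qed

lemma norm_henon_ge: "norm (poly P (snd p)) - norm \<delta> * norm (fst p) \<le> norm (henon P \<delta> p)"
proof -
  have "norm (poly P (snd p)) - norm \<delta> * norm (fst p) \<le> norm (poly P (snd p) - \<delta> * fst p)"
    using norm_triangle_ineq2[of "poly P (snd p)" "\<delta> * fst p"] by (simp add: norm_mult)
  also have "\<dots> \<le> norm (henon P \<delta> p)"
    using norm_snd_le[of "poly P (snd p) - \<delta> * fst p" "snd p"]
    by (simp add: henon_def case_prod_beta')
  finally show ?thesis .
qed

lemma henon_expands_outside: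
  assumes "degree P \<ge> 2" and "0 < k"
  shows "expands_outside (horizontal_cone k) (henon P \<delta>)"
  unfolding expands_outside_def
proof
  fix M
  define K where "K = 1 + 1 / k"
  have K: "0 < K"
    using assms(2) by (simp add: K_def add_pos_pos)
  obtain r where r: "\<And>z. r \<le> norm z \<Longrightarrow> (norm \<delta> / k + \<bar>M\<bar> * K) * norm z \<le> norm (poly P z)"
    using poly_dominates_linear[OF assms(1)] unfolding eventually_at_infinity by blast
  have "M * norm p \<le> norm (henon P \<delta> p)"
    if far: "\<bar>r\<bar> * K \<le> norm p" and outside: "p \<notin> horizontal_cone k" for p
  proof -
    have norm_p: "norm p \<le> K * norm (snd p)"
      using outside_horizontal_cone(2)[OF assms(2) outside] by (simp add: K_def)
    then have "K * \<bar>r\<bar> \<le> K * norm (snd p)"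
      using far by (metis mult.commute order_trans)
    then have "\<bar>r\<bar> \<le> norm (snd p)"
      using K by (rule mult_left_le_imp_le)
    then have "(norm \<delta> / k + \<bar>M\<bar> * K) * norm (snd p) \<le> norm (poly P (snd p))"
      by (intro r) simp
    moreover have "norm \<delta> * norm (fst p) \<le> norm \<delta> * (norm (snd p) / k)"
      using outside_horizontal_cone(1)[OF assms(2) outside] by (intro mult_left_mono) simp_all
    moreover have "M * norm p \<le> \<bar>M\<bar> * (K * norm (snd p))"
      using norm_p by (meson abs_ge_self abs_ge_zero mult_left_mono mult_right_mono norm_ge_zero order_trans)
    ultimately show ?thesis
      using norm_henon_ge[of P p \<delta>] by (simp add: algebra_simps)
  qed
  then show "\<forall>\<^sub>F p in at_infinity. p \<notin> horizontal_cone k \<longrightarrow> M * norm p \<le> norm (henon P \<delta> p)"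
    unfolding eventually_at_infinity by blast
qed

lemma henon_inv_expands_outside:
  assumes "degree P \<ge> 2" and "\<delta> \<noteq> 0" and "0 < k"
  shows "expands_outside (rot (pi / 2) -` horizontal_cone k) (henon_inv P \<delta>)"
proof -
  have "expands_outside (horizontal_cone k) (henon (smult (inverse \<delta>) P) (inverse \<delta>))"
    using assms by (intro henon_expands_outside) simp_all
  then have "expands_outside (prod.swap -` horizontal_cone k) (henon_inv P \<delta>)"
    unfolding henon_inv_eq_swap_henon_swap
    by (rule expands_outside_conj_isometry) (simp_all add: norm_commute prod.swap_def)
  then show ?thesis
    by (simp add: swap_vimage_horizontal_cone)
qed

(* Index (r, s): r conjugates by the rotation, s takes the inverse; apsnd Not maps each of the
   four generators to its inverse. *)
definition henon_family :: "complex poly \<Rightarrow> complex \<Rightarrow> real \<Rightarrow> bool \<times> bool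
    \<Rightarrow> complex \<times> complex \<Rightarrow> complex \<times> complex" where
  "henon_family P \<delta> \<theta> = (\<lambda>(r, s).
     rot (- (if r then \<theta> else 0)) \<circ> (if s then henon_inv P \<delta> else henon P \<delta>) \<circ> rot (if r then \<theta> else 0))"

definition henon_angle :: "real \<Rightarrow> bool \<times> bool \<Rightarrow> real" where
  "henon_angle \<theta> = (\<lambda>(r, s). (if r then \<theta> else 0) + (if s then pi / 2 else 0))"

definition henon_cone :: "real \<Rightarrow> real \<Rightarrow> bool \<times> bool \<Rightarrow> (complex \<times> complex) set" where
  "henon_cone \<theta> k j = rot (henon_angle \<theta> j) -` horizontal_cone k"

lemma henon_family_generators:
  assumes "\<delta> \<noteq> 0"
  shows "henon_family P \<delta> \<theta> (False, False) = henon P \<delta>"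
    and "henon_family P \<delta> \<theta> (True, False) = inv (rot \<theta>) \<circ> henon P \<delta> \<circ> rot \<theta>"
    and "henon_family P \<delta> \<theta> (False, True) = inv (henon P \<delta>)"
    and "henon_family P \<delta> \<theta> (True, True) = inv (inv (rot \<theta>) \<circ> henon P \<delta> \<circ> rot \<theta>)"
  using assms
  by (simp_all add: henon_family_def inv_rot inv_henon o_inv_distrib bij_rot bij_henon bij_comp
      o_assoc fun_eq_iff)

lemma henon_family_rev: "\<delta> \<noteq> 0 \<Longrightarrow> henon_family P \<delta> \<theta> (apsnd Not j) (henon_family P \<delta> \<theta> j p) = p"
  by (cases j) (simp add: henon_family_def)

lemma continuous_on_henon_family: "continuous_on UNIV (henon_family P \<delta> \<theta> j)"
proof (cases j)
  case (Pair r s)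
  have base: "continuous_on UNIV (if s then henon_inv P \<delta> else henon P \<delta>)"
    by (simp add: continuous_on_henon continuous_on_henon_inv)
  show ?thesis
    unfolding Pair henon_family_def case_prod_conv comp_def
    by (intro continuous_on_compose2[OF continuous_on_rot] continuous_on_compose2[OF base]
        continuous_on_rot) auto
qed

lemma henon_family_expands_outside:
  assumes "degree P \<ge> 2" and "\<delta> \<noteq> 0" and "0 < k"
  shows "expands_outside (henon_cone \<theta> k j) (henon_family P \<delta> \<theta> j)"
proof (cases j)
  case (Pair r s)
  define \<phi> \<psi> where "\<phi> = (if r then \<theta> else 0)" and "\<psi> = (if s then pi / 2 else 0)"
  have "expands_outside (rot \<psi> -` horizontal_cone k) (if s then henon_inv P \<delta> else henon P \<delta>)"
    using henon_expands_outside[OF assms(1,3)] henon_inv_expands_outside[OF assms]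
    by (simp add: \<psi>_def)
  then have "expands_outside (rot \<phi> -` rot \<psi> -` horizontal_cone k)
      (rot (- \<phi>) \<circ> (if s then henon_inv P \<delta> else henon P \<delta>) \<circ> rot \<phi>)"
    by (rule expands_outside_conj_isometry) simp_all
  moreover have "rot \<phi> -` rot \<psi> -` horizontal_cone k = rot (\<phi> + \<psi>) -` horizontal_cone k"
    by (simp add: vimage_def rot_add add.commute)
  ultimately show ?thesis
    by (simp add: Pair henon_family_def henon_cone_def henon_angle_def \<phi>_def \<psi>_def)
qed

lemma henon_angles_apart:
  assumes "i \<noteq> j"
  shows "min \<bar>sin \<theta>\<bar> \<bar>cos \<theta>\<bar> \<le> \<bar>sin (henon_angle \<theta> j - henon_angle \<theta> i)\<bar>"
proof -
  obtain r s r' s' where ij: "i = (r, s)" "j = (r', s')"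
    by (cases i, cases j)
  have "min \<bar>sin \<theta>\<bar> \<bar>cos \<theta>\<bar> \<le> 1"
    using abs_sin_le_one[of \<theta>] by linarith
  then show ?thesis
    using assms unfolding ij
    by (cases r; cases s; cases r'; cases s') (simp_all add: henon_angle_def sin_diff sin_add cos_add)
qed

lemma henon_cones_disjoint:
  assumes k: "0 < k" "4 * k \<le> min \<bar>sin \<theta>\<bar> \<bar>cos \<theta>\<bar>"
    and "p \<noteq> 0" and "p \<in> henon_cone \<theta> k i" and "p \<in> henon_cone \<theta> k j"
  shows "i = j"
proof (rule ccontr)
  assume "i \<noteq> j"
  let ?q = "rot (henon_angle \<theta> i) p" and ?t = "henon_angle \<theta> j - henon_angle \<theta> i"
  have "?q \<in> horizontal_cone k" "rot ?t ?q \<in> horizontal_cone k"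
    using assms(4,5) by (simp_all add: henon_cone_def rot_add)
  moreover have "4 * k \<le> \<bar>sin ?t\<bar>"
    using henon_angles_apart[OF \<open>i \<noteq> j\<close>, of \<theta>] k(2) by linarith
  ultimately have "?q = 0"
    using horizontal_cone_rot_disjoint k(1) by blast
  then show False
    using \<open>p \<noteq> 0\<close> norm_rot[of "henon_angle \<theta> i" p] by simp
qed

lemma apsnd_Not_fixed_point_free_involution:
  fixes j :: "bool \<times> bool"
  shows "apsnd Not (apsnd Not j) = j" and "apsnd Not j \<noteq> j" and "\<exists>i. i \<noteq> j \<and> i \<noteq> apsnd Not j"
proof -
  show "apsnd Not (apsnd Not j) = j" "apsnd Not j \<noteq> j"
    by (cases j, simp)+
  show "\<exists>i. i \<noteq> j \<and> i \<noteq> apsnd Not j"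
    by (rule exI[of _ "apfst Not j"]) (cases j, simp)
qed

lemma sum_UNIV_bool_prod:
  fixes f :: "bool \<times> bool \<Rightarrow> 'a::comm_monoid_add"
  shows "(\<Sum>j\<in>UNIV. f j) = f (False, False) + f (True, False) + f (False, True) + f (True, True)"
proof -
  have UNIV_eq: "UNIV = {(False, False), (True, False), (False, True), (True, True)}"
    by auto
  show ?thesis
    by (subst UNIV_eq) (simp add: add.assoc)
qed

lemma henon_family_ping_pong:
  assumes "degree P \<ge> 2" and "\<delta> \<noteq> 0" and "sin \<theta> \<noteq> 0" and "cos \<theta> \<noteq> 0"
  obtains R where "0 \<le> R"
    and "ping_pong (henon_family P \<delta> \<theta>) (apsnd Not) (\<lambda>p. if R < norm p then norm p else 0)
           (henon_cone \<theta> (min \<bar>sin \<theta>\<bar> \<bar>cos \<theta>\<bar> / 4))"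
proof -
  define k where "k = min \<bar>sin \<theta>\<bar> \<bar>cos \<theta>\<bar> / 4"
  have k: "0 < k"
    using assms(3,4) by (simp add: k_def)
  have "\<forall>\<^sub>F p in at_infinity. \<forall>j. p \<notin> henon_cone \<theta> k j \<longrightarrow>
      2 * norm p \<le> norm (henon_family P \<delta> \<theta> j p)"
    using henon_family_expands_outside[OF assms(1,2) k]
    by (intro eventually_all_finite) (simp add: expands_outside_def)
  then obtain b where b: "\<And>p j. b \<le> norm p \<Longrightarrow> p \<notin> henon_cone \<theta> k j \<Longrightarrow>
      2 * norm p \<le> norm (henon_family P \<delta> \<theta> j p)"
    unfolding eventually_at_infinity by blast
  define R where "R = max 1 b"
  have "ping_pong (henon_family P \<delta> \<theta>) (apsnd Not) (\<lambda>p. if R < norm p then norm p else 0)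
      (henon_cone \<theta> k)"
  proof
    fix p j
    assume "0 < (if R < norm p then norm p else 0)" and "p \<notin> henon_cone \<theta> k j"
    then have "R < norm p" "2 * norm p \<le> norm (henon_family P \<delta> \<theta> j p)"
      using b[of p j] by (auto simp: R_def split: if_splits)
    then show "(if R < norm p then norm p else 0) + 1
        \<le> (if R < norm (henon_family P \<delta> \<theta> j p) then norm (henon_family P \<delta> \<theta> j p) else 0)"
      by (simp add: R_def)
  next
    fix p i j
    assume "0 < (if R < norm p then norm p else 0)"
      and "p \<in> henon_cone \<theta> k i" and "p \<in> henon_cone \<theta> k j"
    then show "i = j"
      using k by (intro henon_cones_disjoint[of k \<theta> p]) (auto simp: k_def split: if_splits)
  qed (simp_all add: henon_family_rev assms(2) apsnd_Not_fixed_point_free_involution)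
  moreover have "0 \<le> R"
    by (simp add: R_def)
  ultimately show ?thesis
    using that by (simp add: k_def)
qed

lemma sin_cos_nonzero_off_axes:
  assumes "0 < \<theta>" and "\<theta> < 2 * pi" and "\<theta> \<notin> {pi / 2, pi, 3 * pi / 2}"
  shows "sin \<theta> \<noteq> 0" and "cos \<theta> \<noteq> 0"
proof -
  have "sin (2 * \<theta>) \<noteq> 0"
  proof
    assume "sin (2 * \<theta>) = 0"
    then obtain i :: int where i: "2 * \<theta> = of_int i * pi"
      by (auto simp: sin_zero_iff_int2)
    then have "0 < of_int i * pi" "of_int i * pi < 4 * pi"
      using assms(1,2) by linarith+
    then have "0 < i" "i < 4"
      by (simp_all add: zero_less_mult_iff)
    then have "i = 1 \<or> i = 2 \<or> i = 3"
      by linarith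
    then show False
      using i assms(3) by auto
  qed
  then show "sin \<theta> \<noteq> 0" and "cos \<theta> \<noteq> 0"
    by (auto simp: sin_double)
qed

theorem theoremB:
  fixes P :: "complex poly" and \<delta> :: complex and \<theta> :: real
    and a1 a2 a3 a4 :: real and \<mu> :: "(complex \<times> complex) measure"
  defines "h1 \<equiv> henon P \<delta>"
  defines "h2 \<equiv> inv (rot \<theta>) \<circ> henon P \<delta> \<circ> rot \<theta>"
  assumes "degree P \<ge> 2"
    and "\<delta> \<noteq> 0"
    and "0 < \<theta>" and "\<theta> < 2 * pi"
    and "\<theta> \<notin> {pi / 2, pi, 3 * pi / 2}"
    and "a1 > 0" and "a2 > 0" and "a3 > 0" and "a4 > 0"
    and "a1 + a2 + a3 + a4 = 1"
    and "sets \<mu> = sets borel"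
    and "prob_space \<mu>"
    and "\<forall>A \<in> sets borel.
           emeasure \<mu> A =
             ennreal a1 * emeasure (distr \<mu> borel h1) A
           + ennreal a2 * emeasure (distr \<mu> borel h2) A
           + ennreal a3 * emeasure (distr \<mu> borel (inv h1)) A
           + ennreal a4 * emeasure (distr \<mu> borel (inv h2)) A"
  shows "compact (measure_support \<mu>)"
proof -
  define g where "g = henon_family P \<delta> \<theta>"
  define a :: "bool \<times> bool \<Rightarrow> real"
    where "a = (\<lambda>(r, s). if s then if r then a4 else a3 else if r then a2 else a1)"
  have a_pos: "0 < a j" for j
    using assms(8-11) by (auto simp: a_def split: prod.split)
  have a_sum: "(\<Sum>j\<in>UNIV. a j) = 1"
    using assms(12) by (simp add: sum_UNIV_bool_prod a_def)
  have stationary: "\<forall>A \<in> sets borel.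
      emeasure \<mu> A = (\<Sum>j\<in>UNIV. ennreal (a j) * emeasure (distr \<mu> borel (g j)) A)"
    using assms(15)
    by (simp add: sum_UNIV_bool_prod a_def g_def h1_def h2_def henon_family_generators[OF assms(4)])
  have g_meas: "g j \<in> borel \<rightarrow>\<^sub>M borel" for j
    unfolding g_def by (intro borel_measurable_continuous_onI continuous_on_henon_family)
  have "sin \<theta> \<noteq> 0" "cos \<theta> \<noteq> 0"
    using sin_cos_nonzero_off_axes[OF assms(5-7)] by simp_all
  then obtain R where "0 \<le> R" and ping_pong: "ping_pong g (apsnd Not)
      (\<lambda>p. if R < norm p then norm p else 0) (henon_cone \<theta> (min \<bar>sin \<theta>\<bar> \<bar>cos \<theta>\<bar> / 4))"
    unfolding g_def by (rule henon_family_ping_pong[OF assms(3,4)])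
  have l_meas: "(\<lambda>p. if R < norm p then norm p else 0) \<in> borel_measurable borel"
    by measurable
  have "emeasure \<mu> {p \<in> space borel. 0 < (if R < norm p then norm p else 0)} = 0"
    by (rule ping_pong.stationary_measure_null_far[OF ping_pong prob_space.finite_measure[OF assms(14)]
          assms(13) g_meas l_meas a_pos a_sum stationary apsnd_Not_fixed_point_free_involution(1,3)])
  moreover have "{p \<in> space borel. 0 < (if R < norm p then norm p else 0)} = - cball 0 R"
    using \<open>0 \<le> R\<close> by auto
  ultimately show ?thesis
    by (metis compact_measure_support)
qed

end
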